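(* Let $q(w)=w^4$, $\psi(w)=\frac{iw+1}{w+i}$, $\Psi[z:w:t]=[z:iw+t:it+w]$ (an automorphism of $\mathbb{P}^2$), and $X:=\{[z:w:t]\in\mathbb{P}^2:z=0\}$. Let $R>0$, $\epsilon_0>0$, $l\ge1$ and open neighborhoods $U_1^l,U_2^l,U_3^l$ of $r_1=1,r_2=e^{2i\pi/3},r_3=e^{4i\pi/3}$ be as in the context. There exist $\tilde l\ge1$ and $\tilde\lambda>1$ such that for each $\alpha\in\mathbb{C}^*$, if $\eta\in\mathbb{C}^*$ is sufficiently close to $0$, then the map $F_\eta(z,w):=(\tilde\lambda z+\eta q^{\tilde l}(z),q^{\tilde l}(w))$ (as an endomorphism of $\mathbb{P}^2$) satisfies $$X\cup\overline{(\alpha\epsilon_0^{-1}\mathbb{D})\times\textstyle\bigcup_{i=1}^3U_i^l}\subset F_\eta\circ\Psi\Big((\alpha\epsilon_0^{-1}\mathbb{D})\times(R\mathbb{D}\setminus R^{-1}\mathbb{D})\Big).$$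
   Context: Setting: $R>0$ is large enough that $\psi^{-1}(\{r_1,r_2,r_3\})\subset R\mathbb{D}\setminus R^{-1}\mathbb{D}$; $\epsilon_0>0$ and the neighborhoods $U_i^l$ of $r_i$ are those given (for this $R$) by the statement: there exist $0<\lambda<1$, $\epsilon_0>0$, $l_0$ and neighborhoods $(U_i^l)_{l\ge l_0}$ of $r_i$ with exponentially shrinking diameters such that for all $l\ge l_0$, $\alpha\in\mathbb{C}^*$, the map $(z,w)\mapsto(\lambda z+\alpha w,w^{4^l})$ maps $(\alpha\epsilon_0^{-1}\mathbb{D})\times\bigcup_iU_i^l$ onto a set containing $\overline{(\alpha\epsilon_0^{-1}\mathbb{D})\times(R\mathbb{D}\setminus R^{-1}\mathbb{D})}$; and $l\ge l_0$ is chosen with $\overline{\bigcup_{i=1}^3(U_i^l\cup\psi^{-1}(U_i^l))}\subset R\mathbb{D}\setminus R^{-1}\mathbb{D}$. Subsets of $\mathbb{C}^2$ are viewed in $\mathbb{P}^2$ via $(z,w)\mapsto[z:w:1]$. $\mathbb{D}$ is the unit disc. *)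

theory Defs
  imports "HOL-Analysis.Analysis"
begin

text \<open>Points of the projective plane P2 are represented by nonzero triples in C3
  (homogeneous coordinates); a subset of P2 is represented by its cone of
  nonzero representatives (closed under nonzero complex scaling).\<close>

type_synonym triple = "complex \<times> complex \<times> complex"

definition psi :: "complex \<Rightarrow> complex" where
  "psi w = (\<i> * w + 1) / (w + \<i>)"

definition rt :: "nat \<Rightarrow> complex" where
  "rt i = cis (2 * pi * (real i - 1) / 3)"

definition annulus :: "real \<Rightarrow> complex set" where
  "annulus R = ball 0 R - ball 0 (1 / R)"

definition Psi_hom :: "triple \<Rightarrow> triple" where
  "Psi_hom = (\<lambda>(z, w, t). (z, \<i> * w + t, \<i> * t + w))"

text \<open>Homogenisation (degree d = 4^lt) of F_eta(z,w) = (lam z + eta q^lt(z), q^lt(w)),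
  q(w) = w^4, so q^lt(w) = w^(4^lt).\<close>
definition F_hom :: "real \<Rightarrow> complex \<Rightarrow> nat \<Rightarrow> triple \<Rightarrow> triple" where
  "F_hom lam eta lt = (\<lambda>(z, w, t).
     (of_real lam * z * t ^ (4 ^ lt - 1) + eta * z ^ (4 ^ lt), w ^ (4 ^ lt), t ^ (4 ^ lt)))"

definition line_X_cone :: "triple set" where
  "line_X_cone = {(z, w, t). z = 0 \<and> (w, t) \<noteq> (0, 0)}"

definition affine_cone :: "(complex \<times> complex) set \<Rightarrow> triple set" where
  "affine_cone S = {(c * z, c * w, c) | c z w. c \<noteq> 0 \<and> (z, w) \<in> S}"

text \<open>Cone of the image in P2 of S (a subset of C2 viewed in P2) under the
  projective map induced by the homogeneous map G.\<close>
definition cone_image :: "(triple \<Rightarrow> triple) \<Rightarrow> (complex \<times> complex) set \<Rightarrow> triple set" where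
  "cone_image G S = {(c * a, c * b, c * e) | c a b e. c \<noteq> 0 \<and> (a, b, e) \<noteq> (0, 0, 0) \<and>
      (\<exists>z w. (z, w) \<in> S \<and> G (z, w, 1) = (a, b, e))}"

end

theory Submission
  imports Defs
begin

text \<open>Take \<open>lt = 1\<close> and \<open>lamt = 8\<close>. In homogeneous coordinates
  \<open>F_\<eta> \<circ> \<Psi>\<close> sends \<open>[u s : w : 1]\<close>, where \<open>s = i + w\<close>, to
  \<open>[s\<^sup>4 (8u + \<eta> u\<^sup>4) : (i w + 1)\<^sup>4 : s\<^sup>4]\<close>. Given a target \<open>[z : b : 1]\<close>, choose a
  fourth root \<open>\<zeta>\<close> of \<open>b\<close> in the sector \<open>|Im \<zeta>| \<le> Re \<zeta>\<close> and put
  \<open>w = \<psi>\<^sup>-\<^sup>1(\<zeta>)\<close>, so that \<open>i w + 1 = \<zeta> s\<close>. On that sector \<open>\<psi>\<^sup>-\<^sup>1\<close> takes values in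
  \<open>6\<^sup>-\<^sup>1 \<le> |w|\<^sup>2 \<le> 6\<close> with \<open>|s| < 3\<close>, while the hypothesis on \<open>R\<close> forces
  \<open>R\<^sup>2 > 6\<close>, so \<open>w\<close> lies in the annulus. Finally Brouwer's theorem solves
  \<open>8u + \<eta> u\<^sup>4 = z\<close> with \<open>|u| \<le> r/4\<close> once \<open>\<eta>\<close> is small, so \<open>|u s| < r\<close>.
  The remaining points \<open>[0 : b : 0]\<close> are the image of \<open>(0, -i)\<close>.\<close>

definition psi_inv :: "complex \<Rightarrow> complex" where
  "psi_inv z = (1 - \<i> * z) / (z - \<i>)"

lemma psi_inv_add_i: "z \<noteq> \<i> \<Longrightarrow> psi_inv z + \<i> = 2 / (z - \<i>)"
  unfolding psi_inv_def by (simp add: field_simps)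

lemma psi_inv_add_i_nonzero: "z \<noteq> \<i> \<Longrightarrow> \<i> + psi_inv z \<noteq> 0"
  using psi_inv_add_i[of z] by (simp add: add.commute)

lemma i_mult_psi_inv_add_1: "z \<noteq> \<i> \<Longrightarrow> \<i> * psi_inv z + 1 = z * (\<i> + psi_inv z)"
  unfolding psi_inv_def by (simp add: field_simps)

lemma psi_psi_inv: "z \<noteq> \<i> \<Longrightarrow> psi (psi_inv z) = z"
  using i_mult_psi_inv_add_1[of z] psi_inv_add_i_nonzero[of z]
  unfolding psi_def by (simp add: field_simps add.commute)

lemma norm_psi_inv_sq:
  "cmod (psi_inv z) ^ 2 = ((1 + Im z)\<^sup>2 + (Re z)\<^sup>2) / ((Re z)\<^sup>2 + (Im z - 1)\<^sup>2)"
proof -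
  have "cmod (psi_inv z) ^ 2 = cmod (1 - \<i> * z) ^ 2 / cmod (z - \<i>) ^ 2"
    unfolding psi_inv_def by (simp add: norm_divide power_divide)
  then show ?thesis
    unfolding cmod_power2 by (simp add: algebra_simps)
qed

lemma norm_psi_inv_add_i_sq:
  "z \<noteq> \<i> \<Longrightarrow> cmod (psi_inv z + \<i>) ^ 2 = 4 / ((Re z)\<^sup>2 + (Im z - 1)\<^sup>2)"
proof -
  assume "z \<noteq> \<i>"
  then have "cmod (psi_inv z + \<i>) ^ 2 = 4 / cmod (z - \<i>) ^ 2"
    unfolding psi_inv_add_i[OF \<open>z \<noteq> \<i>\<close>] by (simp add: norm_divide power_divide)
  then show ?thesis
    unfolding cmod_power2 by (simp add: algebra_simps)
qed

definition sector :: "complex set" where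
  "sector = {z. \<bar>Im z\<bar> \<le> Re z}"

lemma sector_neq_i: "z \<in> sector \<Longrightarrow> z \<noteq> \<i>"
  unfolding sector_def by auto

lemma fourth_root_in_sector: "\<exists>z\<in>sector. z ^ 4 = c"
proof -
  define r where "r = csqrt (csqrt c)"
  have r4: "r ^ 4 = c"
    unfolding r_def by (metis power2_csqrt power_mult num_double numeral_times_numeral)
  have rotations: "(\<i> * r) ^ 4 = c" "(- r) ^ 4 = c" "(- \<i> * r) ^ 4 = c"
    using r4 by (simp_all add: power_mult_distrib)
  consider "r \<in> sector" | "- r \<in> sector" | "- \<i> * r \<in> sector" | "\<i> * r \<in> sector"
    unfolding sector_def by (cases "\<bar>Im r\<bar> \<le> \<bar>Re r\<bar>"; cases "0 \<le> Re r"; cases "0 \<le> Im r") auto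
  then show ?thesis
    using r4 rotations by cases blast+
qed

lemma psi_inv_sector_bounds:
  assumes "z \<in> sector"
  shows "cmod (psi_inv z) ^ 2 \<le> 6" "1/6 \<le> cmod (psi_inv z) ^ 2"
    and "cmod (psi_inv z + \<i>) ^ 2 \<le> 8"
proof -
  define x y where "x = Re z" and "y = Im z"
  have xy: "y\<^sup>2 \<le> x\<^sup>2"
    using assms unfolding sector_def x_def y_def
    by (metis abs_ge_zero abs_le_square_iff abs_of_nonneg mem_Collect_eq order_trans)
  have squares: "0 \<le> (2*y - 1)\<^sup>2" "0 \<le> (10*y - 7)\<^sup>2" "0 \<le> (10*y + 7)\<^sup>2"
    by simp_all
  then have denom: "1/2 \<le> x\<^sup>2 + (y - 1)\<^sup>2"
    using xy by (simp add: power2_eq_square algebra_simps)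
  have upper: "(1 + y)\<^sup>2 + x\<^sup>2 \<le> 6 * (x\<^sup>2 + (y - 1)\<^sup>2)"
    and lower: "x\<^sup>2 + (y - 1)\<^sup>2 \<le> 6 * ((1 + y)\<^sup>2 + x\<^sup>2)"
    using xy squares by (simp_all add: power2_eq_square algebra_simps)
  have "cmod (psi_inv z) ^ 2 = ((1 + y)\<^sup>2 + x\<^sup>2) / (x\<^sup>2 + (y - 1)\<^sup>2)"
    unfolding norm_psi_inv_sq x_def y_def ..
  then show "cmod (psi_inv z) ^ 2 \<le> 6" "1/6 \<le> cmod (psi_inv z) ^ 2"
    using upper lower denom by (simp_all add: divide_le_eq le_divide_eq)
  have "cmod (psi_inv z + \<i>) ^ 2 = 4 / (x\<^sup>2 + (y - 1)\<^sup>2)"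
    using norm_psi_inv_add_i_sq[OF sector_neq_i[OF assms]] x_def y_def by simp
  then show "cmod (psi_inv z + \<i>) ^ 2 \<le> 8"
    using denom by (simp add: divide_le_eq)
qed

lemma norm_psi_inv_add_i_lt_3: "z \<in> sector \<Longrightarrow> cmod (\<i> + psi_inv z) < 3"
  using psi_inv_sector_bounds(3)[of z] power2_less_imp_less[of "cmod (\<i> + psi_inv z)" 3]
  by (simp add: add.commute)

lemma psi_inv_sector_in_annulus:
  assumes "6 < R\<^sup>2" "R > 0" "z \<in> sector"
  shows "psi_inv z \<in> annulus R"
proof -
  note bounds = psi_inv_sector_bounds[OF assms(3)]
  have "cmod (psi_inv z) ^ 2 < R\<^sup>2"
    using bounds(1) assms(1) by linarith
  then have "cmod (psi_inv z) < R"
    using assms(2) power2_less_imp_less by fastforce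
  moreover have "(1 / R)\<^sup>2 < 1 / 6"
    using assms(1) by (simp add: power_divide divide_less_eq)
  then have "(1 / R)\<^sup>2 < cmod (psi_inv z) ^ 2"
    using bounds(2) by linarith
  then have "1 / R < cmod (psi_inv z)"
    using power2_less_imp_less by fastforce
  ultimately show ?thesis
    unfolding annulus_def by simp
qed

lemma annulus_preimage_roots_imp_radius_sq_gt_6:
  assumes "psi -` {rt 1, rt 2, rt 3} \<subseteq> annulus R"
  shows "6 < R\<^sup>2"
proof -
  define z where "z = rt 2"
  have z: "Re z = -1/2" "Im z = sqrt 3 / 2"
    unfolding z_def rt_def by (simp_all add: cos_120' sin_120' mult.commute)
  then have "z \<noteq> \<i>" by auto
  then have "psi_inv z \<in> annulus R"
    using assms psi_psi_inv[of z] z_def by auto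
  then have norm_lt: "cmod (psi_inv z) < R"
    unfolding annulus_def by auto
  have "cmod (psi_inv z) ^ 2 = ((1 + sqrt 3 / 2)\<^sup>2 + 1/4) / (1/4 + (sqrt 3 / 2 - 1)\<^sup>2)"
    unfolding norm_psi_inv_sq z by (simp add: power2_eq_square)
  also have "\<dots> = (2 + sqrt 3) / (2 - sqrt 3)"
    by (simp add: power2_eq_square algebra_simps add_divide_distrib)
  also have "6 < \<dots>"
  proof -
    have "10/7 < sqrt 3" using real_less_rsqrt[of "10/7" 3] by (simp add: power2_eq_square)
    moreover have "sqrt 3 < 2" using real_sqrt_less_iff[of 3 4] by simp
    ultimately show ?thesis by (simp add: less_divide_eq)
  qed
  finally show ?thesis
    using norm_lt by (smt (verit) norm_ge_zero power_strict_mono zero_less_numeral)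
qed

lemma exists_solution_linear_plus_monomial:
  fixes z eta :: complex and lam \<rho> :: real
  assumes "lam > 0" "\<rho> \<ge> 0" "cmod z + cmod eta * \<rho> ^ d \<le> lam * \<rho>"
  shows "\<exists>u\<in>cball 0 \<rho>. of_real lam * u + eta * u ^ d = z"
proof -
  define T where "T u = (z - eta * u ^ d) / of_real lam" for u
  obtain u where "u \<in> cball 0 \<rho>" "T u = u"
  proof (rule brouwer[of "cball 0 \<rho>" T])
    show "continuous_on (cball 0 \<rho>) T"
      unfolding T_def by (intro continuous_intros) (use assms(1) in simp)
    show "T \<in> cball 0 \<rho> \<rightarrow> cball 0 \<rho>"
    proof
      fix v :: complex assume "v \<in> cball 0 \<rho>"
      then have "cmod (eta * v ^ d) \<le> cmod eta * \<rho> ^ d"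
        by (simp add: norm_mult norm_power mult_left_mono power_mono)
      then have "cmod (z - eta * v ^ d) \<le> lam * \<rho>"
        using assms(3) norm_triangle_ineq4[of z "eta * v ^ d"] by linarith
      then show "T v \<in> cball 0 \<rho>"
        unfolding T_def using assms(1) by (simp add: norm_divide divide_le_eq mult.commute)
    qed
  qed (use assms(2) in simp_all)
  then show ?thesis
    unfolding T_def using assms(1) by (auto simp: field_simps)
qed

lemma cone_imageI:
  assumes "G (z, w, 1) = (a, b, e)" "(z, w) \<in> S" "(a, b, e) \<noteq> (0, 0, 0)" "k \<noteq> 0"
  shows "(k * a, k * b, k * e) \<in> cone_image G S"
  unfolding cone_image_def using assms by blast

lemma F_hom_Psi_hom_affine:
  "(F_hom lam eta 1 \<circ> Psi_hom) (z, w, 1) =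
     (of_real lam * z * (\<i> + w) ^ 3 + eta * z ^ 4, (\<i> * w + 1) ^ 4, (\<i> + w) ^ 4)"
  by (simp add: F_hom_def Psi_hom_def)

lemma F_hom_Psi_hom_psi_inv:
  assumes "\<zeta> \<noteq> \<i>"
  defines "s \<equiv> \<i> + psi_inv \<zeta>"
  shows "(F_hom lam eta 1 \<circ> Psi_hom) (u * s, psi_inv \<zeta>, 1) =
           (s ^ 4 * (of_real lam * u + eta * u ^ 4), \<zeta> ^ 4 * s ^ 4, s ^ 4)"
  unfolding F_hom_Psi_hom_affine i_mult_psi_inv_add_1[OF assms(1)] s_def[symmetric]
  by (simp add: power_mult_distrib algebra_simps power_Suc[symmetric] del: power_Suc)

lemma affine_point_in_cone_image:
  assumes R: "6 < R\<^sup>2" "R > 0"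
    and r: "r > 0" "cmod z \<le> r" "cmod eta * (r / 4) ^ 4 \<le> r"
    and "c \<noteq> 0"
  shows "(c * z, c * b, c) \<in> cone_image (F_hom 8 eta 1 \<circ> Psi_hom) (ball 0 r \<times> annulus R)"
proof -
  obtain \<zeta> where \<zeta>: "\<zeta> \<in> sector" "\<zeta> ^ 4 = b"
    using fourth_root_in_sector by blast
  define s where "s = \<i> + psi_inv \<zeta>"
  have s: "s \<noteq> 0" "cmod s < 3"
    unfolding s_def using \<zeta>(1) psi_inv_add_i_nonzero sector_neq_i norm_psi_inv_add_i_lt_3
    by auto
  obtain u where u: "cmod u \<le> r / 4" "8 * u + eta * u ^ 4 = z"
    using exists_solution_linear_plus_monomial[of 8 "r / 4" z eta 4] r by auto
  have "cmod (u * s) < r"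
    using u(1) s(2) r(1) mult_mono'[of "cmod u" "r / 4" "cmod s" 3] by (simp add: norm_mult)
  then have "(u * s, psi_inv \<zeta>) \<in> ball 0 r \<times> annulus R"
    using psi_inv_sector_in_annulus[OF R \<zeta>(1)] by simp
  moreover have "(F_hom 8 eta 1 \<circ> Psi_hom) (u * s, psi_inv \<zeta>, 1) = (s ^ 4 * z, b * s ^ 4, s ^ 4)"
    using F_hom_Psi_hom_psi_inv[OF sector_neq_i[OF \<zeta>(1)], of 8 eta u] u(2) \<zeta>(2)
    unfolding s_def by simp
  ultimately have "(c / s ^ 4 * (s ^ 4 * z), c / s ^ 4 * (b * s ^ 4), c / s ^ 4 * s ^ 4)
                     \<in> cone_image (F_hom 8 eta 1 \<circ> Psi_hom) (ball 0 r \<times> annulus R)"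
    using s(1) \<open>c \<noteq> 0\<close> by (intro cone_imageI) auto
  then show ?thesis
    using s(1) by simp
qed

lemma point_at_infinity_in_cone_image:
  assumes "1 < R" "r > 0" "b \<noteq> 0"
  shows "(0, b, 0) \<in> cone_image (F_hom 8 eta 1 \<circ> Psi_hom) (ball 0 r \<times> annulus R)"
proof -
  have "(0, - \<i>) \<in> ball 0 r \<times> annulus R"
    using assms(1,2) unfolding annulus_def by auto
  moreover have "(F_hom 8 eta 1 \<circ> Psi_hom) (0, - \<i>, 1) = (0, 16, 0)"
    unfolding F_hom_Psi_hom_affine by simp
  ultimately have "(b / 16 * 0, b / 16 * 16, b / 16 * 0)
                     \<in> cone_image (F_hom 8 eta 1 \<circ> Psi_hom) (ball 0 r \<times> annulus R)"
    using assms(3) by (intro cone_imageI) auto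
  then show ?thesis
    by simp
qed

lemma covering_for_small_eta:
  assumes R: "6 < R\<^sup>2" "R > 0"
    and r: "r > 0" "cmod eta * (r / 4) ^ 4 \<le> r"
  shows "line_X_cone \<union> affine_cone (closure (ball 0 r \<times> A))
           \<subseteq> cone_image (F_hom 8 eta 1 \<circ> Psi_hom) (ball 0 r \<times> annulus R)"
proof -
  have "1 < R"
    using R power2_less_imp_less[of 1 R] by simp
  have "p \<in> cone_image (F_hom 8 eta 1 \<circ> Psi_hom) (ball 0 r \<times> annulus R)"
    if p_X: "p \<in> line_X_cone" for p
  proof -
    obtain b e where p: "p = (0, b, e)" "(b, e) \<noteq> (0, 0)"
      using p_X unfolding line_X_cone_def by auto
    show ?thesis
    proof (cases "e = 0")
      case True
      then show ?thesis
        using p point_at_infinity_in_cone_image[OF \<open>1 < R\<close> r(1)] by simp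
    next
      case False
      then show ?thesis
        using p affine_point_in_cone_image[OF R r(1) _ r(2), of 0 e "b / e"] r(1) by simp
    qed
  qed
  moreover have "p \<in> cone_image (F_hom 8 eta 1 \<circ> Psi_hom) (ball 0 r \<times> annulus R)"
    if p_affine: "p \<in> affine_cone (closure (ball 0 r \<times> A))" for p
  proof -
    obtain c z b where "p = (c * z, c * b, c)" "c \<noteq> 0" "(z, b) \<in> closure (ball 0 r \<times> A)"
      using p_affine unfolding affine_cone_def by auto
    moreover from this(3) have "cmod z \<le> r"
      using r(1) by (simp add: closure_Times closure_ball)
    ultimately show ?thesis
      using affine_point_in_cone_image[OF R r(1) _ r(2)] by simp
  qed
  ultimately show ?thesis
    by blast
qed

theorem lemma6p2:
  fixes R eps0 lam :: real and l0 l :: nat and U :: "nat \<Rightarrow> nat \<Rightarrow> complex set"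
  assumes R_pos: "R > 0"
    and R_large: "psi -` {rt 1, rt 2, rt 3} \<subseteq> annulus R"
    and eps0_pos: "eps0 > 0"
    and lam: "0 < lam" "lam < 1"
    and U_nbhd: "\<forall>l'\<ge>l0. \<forall>i\<in>{1,2,3}. open (U i l') \<and> rt i \<in> U i l'"
    and U_shrink: "\<exists>C \<theta>::real. 0 < \<theta> \<and> \<theta> < 1 \<and>
                     (\<forall>l'\<ge>l0. \<forall>i\<in>{1,2,3}. diameter (U i l') \<le> C * \<theta> ^ l')"
    and U_cover: "\<forall>l'\<ge>l0. \<forall>\<alpha>::complex. \<alpha> \<noteq> 0 \<longrightarrow>
        closure (ball 0 (cmod \<alpha> / eps0) \<times> annulus R)
          \<subseteq> (\<lambda>(z, w). (of_real lam * z + \<alpha> * w, w ^ (4 ^ l')))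
               ` (ball 0 (cmod \<alpha> / eps0) \<times> (\<Union>i\<in>{1,2,3}. U i l'))"
    and l_ge: "l \<ge> l0"
    and l_choice: "closure (\<Union>i\<in>{1,2,3}. U i l \<union> psi -` U i l) \<subseteq> annulus R"
  shows "\<exists>lt::nat. lt \<ge> 1 \<and> (\<exists>lamt::real. lamt > 1 \<and>
           (\<forall>\<alpha>::complex. \<alpha> \<noteq> 0 \<longrightarrow>
              (\<forall>\<^sub>F eta in at (0::complex).
                 line_X_cone \<union> affine_cone (closure (ball 0 (cmod \<alpha> / eps0) \<times> (\<Union>i\<in>{1,2,3}. U i l)))
                   \<subseteq> cone_image (F_hom lamt eta lt \<circ> Psi_hom)
                        (ball 0 (cmod \<alpha> / eps0) \<times> annulus R))))"
proof (intro exI[of _ "1::nat"] conjI exI[of _ "8::real"] allI impI)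
  fix \<alpha> :: complex
  assume "\<alpha> \<noteq> 0"
  define r where "r = cmod \<alpha> / eps0"
  have "r > 0"
    unfolding r_def using \<open>\<alpha> \<noteq> 0\<close> eps0_pos by simp
  then have "\<forall>\<^sub>F eta in at (0::complex). cmod eta * (r / 4) ^ 4 \<le> r"
    unfolding eventually_at
    by (intro exI[of _ "r / (r / 4) ^ 4"]) (auto simp: pos_less_divide_eq less_imp_le)
  then show "\<forall>\<^sub>F eta in at (0::complex).
      line_X_cone \<union> affine_cone (closure (ball 0 (cmod \<alpha> / eps0) \<times> (\<Union>i\<in>{1,2,3}. U i l)))
        \<subseteq> cone_image (F_hom 8 eta 1 \<circ> Psi_hom) (ball 0 (cmod \<alpha> / eps0) \<times> annulus R)"
    using covering_for_small_eta[OF annulus_preimage_roots_imp_radius_sq_gt_6[OF R_large] R_pos \<open>r > 0\<close>]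
    unfolding r_def by (rule eventually_mono)
qed simp_all

end
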